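(* Let $H:\mathbb{R}\to\mathbb{R}$ be a smooth, bounded function with $H(-s)=H(s)\ge 0$ for all $s$, $\int_0^{+\infty} sH(s)\,ds=1$, and such that $H$ either has compact support or $H$ and all its derivatives decay sufficiently fast as $|s|\to\infty$. Let $\zeta:\mathbb{R}\to\mathbb{R}$ be continuous and bounded with $\min_{x\in\mathbb{R}}\zeta(x)=\delta_m>0$, and define $\gamma(s,x)=\zeta(x)^{-2}H(s/\zeta(x))$. Let $\psi_0$ be piecewise continuous and uniformly bounded on $\mathbb{R}$ with a finite number of discontinuities, and let $u=u(x,t)$ be the solution of $$u_t(x,t)+\int_0^{+\infty}\big[u(x,t)-u(x-s,t)\big]\gamma(s,x)\,ds=0,\quad x\in\mathbb{R},\ t>0,\qquad u(x,0)=\psi_0(x).$$ Then for all $t>0$ the function $u(\cdot,t)$ remains piecewise continuous, and its only points of discontinuity are (among) the points of discontinuity of the initial data $\psi_0$.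
   Context: This is a nonlocal analogue of the linear convection equation $u_t+u_x=0$; the integral term is an upwind nonlocal derivative with kernel $\gamma$ and spatially varying horizon parameter $\zeta(x)$, which measures the range of nonlocal interactions. Throughout, the horizon is assumed strictly positive everywhere (fully nonlocal regime). *)

theory Defs
  imports "HOL-Analysis.Analysis"
begin

definition gamma_ker :: "(real \<Rightarrow> real) \<Rightarrow> (real \<Rightarrow> real) \<Rightarrow> real \<Rightarrow> real \<Rightarrow> real" where
  "gamma_ker H \<zeta> s x = H (s / \<zeta> x) / (\<zeta> x)\<^sup>2"

definition pw_cont_off :: "(real \<Rightarrow> real) \<Rightarrow> real set \<Rightarrow> bool" where
  "pw_cont_off f D \<longleftrightarrow> finite D \<and> (\<forall>x. x \<notin> D \<longrightarrow> isCont f x) \<and>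
     (\<forall>d\<in>D. (\<exists>l. (f \<longlongrightarrow> l) (at_left d)) \<and> (\<exists>r. (f \<longlongrightarrow> r) (at_right d)))"

definition smooth_fun :: "(real \<Rightarrow> real) \<Rightarrow> bool" where
  "smooth_fun H \<longleftrightarrow> (\<forall>k x. ((deriv ^^ k) H) differentiable (at x))"

end

theory Submission
  imports Defs "HOL-Probability.Sinc_Integral"
begin

(* For fixed x the equation is the linear ODE  u' = K(x,t) - m(x) u,  with the kernel mass
   m(x) = int_0^oo gamma(s,x) ds  and the upwind term  K(x,t) = int_0^oo u(x-s,t) gamma(s,x) ds.
   Variation of constants gives
     u(x,t) = exp(-m(x) t) (psi0(x) + int_0^t exp(m(x) tau) K(x,tau) dtau).
   The decay of H and zeta >= delta_m > 0 give gamma(s,x) <= C / (1 + s^2) uniformly in x, and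
   gamma depends continuously on x, so dominated convergence makes m, K and hence the Duhamel
   integral continuous in x.  Thus u(-,t) is psi0 times a continuous factor plus a continuous
   function, and can jump only where psi0 does. *)

lemma inverse_1_plus_square_shift_le:
  fixes x y x0 R :: real
  assumes "\<bar>x - x0\<bar> \<le> R"
  shows "inverse (1 + (x - y)\<^sup>2) \<le> (2 + 2 * R\<^sup>2) * inverse (1 + (y - x0)\<^sup>2)"
proof -
  have "(x - x0)\<^sup>2 \<le> R\<^sup>2"
    using assms by (metis abs_ge_zero power2_abs power_mono)
  moreover have "(y - x0)\<^sup>2 \<le> 2 * (x - y)\<^sup>2 + 2 * (x - x0)\<^sup>2"
    using zero_le_power2[of "2 * x - y - x0"] by (simp add: power2_eq_square algebra_simps)
  ultimately have "1 + (y - x0)\<^sup>2 \<le> (2 + 2 * R\<^sup>2) * (1 + (x - y)\<^sup>2)"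
    by (simp add: algebra_simps) (smt (verit) zero_le_power2 mult_nonneg_nonneg)
  then show ?thesis
    by (simp add: field_simps add_pos_nonneg)
qed

lemma integrable_inverse_1_plus_square_shift:
  "integrable lborel (\<lambda>y::real. inverse (1 + (y - x0)\<^sup>2))"
proof -
  have "integrable lborel (\<lambda>y::real. inverse (1 + y\<^sup>2))"
    using integrable_inverse_1_plus_square by (simp add: set_integrable_def einterval_eq_UNIV)
  from lborel_integrable_real_affine[OF this, of 1 "- x0"] show ?thesis
    by simp
qed

lemma isCont_integral_param:
  fixes f :: "real \<Rightarrow> real \<Rightarrow> real"
  assumes integrable: "\<And>x. f x integrable_on {a..b}"
    and bound: "\<And>x \<tau>. \<tau> \<in> {a<..b} \<Longrightarrow> \<bar>f x \<tau>\<bar> \<le> M"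
    and cont: "\<And>\<tau>. \<tau> \<in> {a<..b} \<Longrightarrow> isCont (\<lambda>x. f x \<tau>) x0"
  shows "isCont (\<lambda>x. integral {a..b} (f x)) x0"
  unfolding continuous_at_sequentially comp_def
proof (intro allI impI)
  fix X assume X: "X \<longlonglongrightarrow> x0"
  \<comment> \<open>Bound and continuity may fail at the left endpoint, which is a null set.\<close>
  define f' where "f' x \<tau> = (if \<tau> = a then 0 else f x \<tau>)" for x \<tau>
  have integral_f': "integral {a..b} (f' x) = integral {a..b} (f x)" for x
    by (rule integral_spike[OF negligible_sing[of a]]) (auto simp: f'_def)
  have "(\<lambda>n. integral {a..b} (f' (X n))) \<longlonglongrightarrow> integral {a..b} (f' x0)"
  proof (rule dominated_convergence(2))
    show "f' (X n) integrable_on {a..b}" for n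
      by (rule integrable_spike[OF integrable negligible_sing[of a]]) (auto simp: f'_def)
    show "(\<lambda>_. \<bar>M\<bar>) integrable_on {a..b}"
      by (rule integrable_const_ivl)
    show "norm (f' (X n) \<tau>) \<le> \<bar>M\<bar>" if "\<tau> \<in> {a..b}" for n \<tau>
      using that bound[of \<tau> "X n"] by (cases "\<tau> = a") (auto simp: f'_def)
    show "(\<lambda>n. f' (X n) \<tau>) \<longlonglongrightarrow> f' x0 \<tau>" if "\<tau> \<in> {a..b}" for \<tau>
      using that isCont_tendsto_compose[OF cont X] by (auto simp: f'_def)
  qed
  then show "(\<lambda>n. integral {a..b} (f (X n))) \<longlonglongrightarrow> integral {a..b} (f x0)"
    by (simp add: integral_f')
qed

lemma variation_of_constants_has_integral:
  fixes w k :: "real \<Rightarrow> real" and a t :: real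
  assumes "0 \<le> t" and "continuous_on {0..} w"
    and "\<And>\<tau>. 0 < \<tau> \<Longrightarrow> (w has_real_derivative k \<tau> - a * w \<tau>) (at \<tau>)"
  shows "((\<lambda>\<tau>. exp (a * \<tau>) * k \<tau>) has_integral exp (a * t) * w t - w 0) {0..t}"
proof -
  have "((\<lambda>\<tau>. exp (a * \<tau>) * k \<tau>) has_integral exp (a * t) * w t - exp (a * 0) * w 0) {0..t}"
  proof (rule fundamental_theorem_of_calculus_interior)
    show "continuous_on {0..t} (\<lambda>\<tau>. exp (a * \<tau>) * w \<tau>)"
      by (intro continuous_intros continuous_on_subset[OF assms(2)]) auto
    fix \<tau> assume "\<tau> \<in> {0<..<t}"
    then have "((\<lambda>\<tau>. exp (a * \<tau>) * w \<tau>) has_real_derivative exp (a * \<tau>) * k \<tau>) (at \<tau>)"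
      using assms(3)[of \<tau>] by (auto intro!: derivative_eq_intros simp: algebra_simps)
    then show "((\<lambda>\<tau>. exp (a * \<tau>) * w \<tau>) has_vector_derivative exp (a * \<tau>) * k \<tau>) (at \<tau>)"
      by (simp add: has_real_derivative_iff_has_vector_derivative)
  qed (use assms(1) in simp)
  then show ?thesis
    by simp
qed

lemma pw_cont_off_mult_add:
  assumes "pw_cont_off f D" and "\<And>x. isCont a x" and "\<And>x. isCont b x"
  shows "pw_cont_off (\<lambda>x. a x * f x + b x) D"
proof -
  have lim: "((\<lambda>x. a x * f x + b x) \<longlongrightarrow> a d * l + b d) F"
    if "(f \<longlongrightarrow> l) F" and "F \<le> at d" for F d l
    using that assms(2,3)[of d] by (intro tendsto_intros) (auto simp: isCont_def intro: tendsto_mono)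
  show ?thesis
    using assms(1) unfolding pw_cont_off_def
  proof (intro conjI allI impI ballI)
    fix x assume "x \<notin> D"
    then show "isCont (\<lambda>x. a x * f x + b x) x"
      using assms(1) lim[where F="at x" and d=x] by (simp add: pw_cont_off_def isCont_def)
  next
    fix d assume "d \<in> D"
    then obtain l r where "(f \<longlongrightarrow> l) (at_left d)" "(f \<longlongrightarrow> r) (at_right d)"
      using assms(1) by (auto simp: pw_cont_off_def)
    then show "\<exists>l. ((\<lambda>x. a x * f x + b x) \<longlongrightarrow> l) (at_left d)"
      and "\<exists>r. ((\<lambda>x. a x * f x + b x) \<longlongrightarrow> r) (at_right d)"
      using lim[where F="at_left d" and d=d] lim[where F="at_right d" and d=d] at_le[of _ UNIV d]
      by auto
  qed simp
qed

locale upwind_kernel =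
  fixes g :: "real \<Rightarrow> real \<Rightarrow> real" and C :: real
  assumes nonneg: "\<And>s x. 0 \<le> g s x"
    and le_cauchy: "\<And>s x. g s x \<le> C * inverse (1 + s\<^sup>2)"
    and isCont_shift: "\<And>y x0. isCont (\<lambda>x. g (x - y) x) x0"
    and continuous_on_kernel: "\<And>x. continuous_on UNIV (\<lambda>s. g s x)"
begin

definition upwind_integral :: "(real \<Rightarrow> real) \<Rightarrow> real \<Rightarrow> real" where
  "upwind_integral v x = (LBINT s:{0<..}. v (x - s) * g s x)"

definition kernel_mass :: "real \<Rightarrow> real" where
  "kernel_mass x = (LBINT s:{0<..}. g s x)"

lemma C_nonneg: "0 \<le> C"
  using nonneg[of 0 0] le_cauchy[of 0 0] by simp

lemma set_integrable_cauchy: "set_integrable lborel {0<..} (\<lambda>s. C * inverse (1 + s\<^sup>2))"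
  using integrable_inverse_1_plus_square_shift[of 0]
  unfolding set_integrable_def by (intro integrable_mult_indicator integrable_mult_right) auto

lemma set_integrable_kernel: "set_integrable lborel {0<..} (\<lambda>s. g s x)"
  unfolding set_integrable_def
proof (rule Bochner_Integration.integrable_bound[OF set_integrable_cauchy[unfolded set_integrable_def]])
  show "(\<lambda>s. indicator {0<..} s *\<^sub>R g s x) \<in> borel_measurable lborel"
    using borel_measurable_continuous_onI[OF continuous_on_kernel] by measurable
  show "AE s in lborel. norm (indicator {0<..} s *\<^sub>R g s x)
      \<le> norm (indicator {0<..} s *\<^sub>R (C * inverse (1 + s\<^sup>2)))"
    using le_cauchy nonneg by (auto simp: indicator_def intro!: AE_I2 order_trans[OF le_cauchy abs_ge_self])
qed

lemma kernel_mass_nonneg: "0 \<le> kernel_mass x"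
  unfolding kernel_mass_def set_lebesgue_integral_def
  by (rule Bochner_Integration.integral_nonneg) (simp add: nonneg)

lemma kernel_mass_le: "kernel_mass x \<le> (LBINT s:{0<..}. C * inverse (1 + s\<^sup>2))"
  unfolding kernel_mass_def by (rule set_integral_mono[OF set_integrable_kernel set_integrable_cauchy le_cauchy])

lemma upwind_integral_eq_lborel:
  "upwind_integral v x = (\<integral>y. indicator {0<..} (x - y) * (v y * g (x - y) x) \<partial>lborel)"
  using lborel_integral_real_affine[of "-1" "\<lambda>s. indicator {0<..} s *\<^sub>R (v (x - s) * g s x)" x]
  unfolding upwind_integral_def set_lebesgue_integral_def by simp

lemma integrable_upwind_integrand:
  assumes "set_integrable lborel {0<..} (\<lambda>s. v (x - s) * g s x)"
  shows "integrable lborel (\<lambda>y. indicator {0<..} (x - y) * (v y * g (x - y) x))"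
  using lborel_integrable_real_affine[OF assms[unfolded set_integrable_def], of "-1" x] by simp

lemma upwind_integrand_le:
  assumes "\<And>y. \<bar>v y\<bar> \<le> B" and "\<bar>x - x0\<bar> \<le> R"
  shows "\<bar>indicator {0<..} (x - y) * (v y * g (x - y) x)\<bar>
    \<le> B * C * (2 + 2 * R\<^sup>2) * inverse (1 + (y - x0)\<^sup>2)"
proof (cases "y < x")
  case True
  have "\<bar>indicator {0<..} (x - y) * (v y * g (x - y) x)\<bar> = \<bar>v y\<bar> * g (x - y) x"
    using True nonneg by (simp add: abs_mult)
  also have "\<dots> \<le> B * (C * inverse (1 + (x - y)\<^sup>2))"
    using assms(1) nonneg by (intro mult_mono le_cauchy) (auto intro: order_trans[OF abs_ge_zero])
  also have "\<dots> \<le> B * (C * ((2 + 2 * R\<^sup>2) * inverse (1 + (y - x0)\<^sup>2)))"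
    using inverse_1_plus_square_shift_le[OF assms(2)] C_nonneg order_trans[OF abs_ge_zero assms(1)]
    by (intro mult_left_mono) auto
  finally show ?thesis
    by (simp add: mult_ac)
next
  case False
  then show ?thesis
    using C_nonneg order_trans[OF abs_ge_zero assms(1)] by simp
qed

lemma isCont_upwind_integral:
  assumes bound: "\<And>y. \<bar>v y\<bar> \<le> B"
    and integrable: "\<And>x. set_integrable lborel {0<..} (\<lambda>s. v (x - s) * g s x)"
  shows "isCont (upwind_integral v) x0"
  unfolding continuous_at_sequentially comp_def upwind_integral_eq_lborel
proof (intro allI impI)
  fix X assume X: "X \<longlonglongrightarrow> x0"
  then have "Bseq (\<lambda>n. X n - x0)"
    using convergent_imp_Bseq convergentI LIM_zero by blast
  then obtain R where R: "\<And>n. \<bar>X n - x0\<bar> \<le> R"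
    unfolding Bseq_def by auto
  show "(\<lambda>n. \<integral>y. indicator {0<..} (X n - y) * (v y * g (X n - y) (X n)) \<partial>lborel)
      \<longlonglongrightarrow> \<integral>y. indicator {0<..} (x0 - y) * (v y * g (x0 - y) x0) \<partial>lborel"
  proof (rule integral_dominated_convergence
      [where w="\<lambda>y. B * C * (2 + 2 * R\<^sup>2) * inverse (1 + (y - x0)\<^sup>2)"])
    show "integrable lborel (\<lambda>y. B * C * (2 + 2 * R\<^sup>2) * inverse (1 + (y - x0)\<^sup>2))"
      using integrable_inverse_1_plus_square_shift by simp
    show "AE y in lborel. norm (indicator {0<..} (X n - y) * (v y * g (X n - y) (X n)))
        \<le> B * C * (2 + 2 * R\<^sup>2) * inverse (1 + (y - x0)\<^sup>2)" for n
      using upwind_integrand_le[OF bound R] by (intro AE_I2) simp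
    \<comment> \<open>Off the single point \<open>y = x0\<close> the indicator is eventually constant along \<open>X\<close>.\<close>
    show "AE y in lborel. (\<lambda>n. indicator {0<..} (X n - y) * (v y * g (X n - y) (X n)))
        \<longlonglongrightarrow> indicator {0<..} (x0 - y) * (v y * g (x0 - y) x0)"
      using AE_lborel_singleton[of x0]
    proof eventually_elim
      case (elim y)
      have lim: "(\<lambda>n. v y * g (X n - y) (X n)) \<longlonglongrightarrow> v y * g (x0 - y) x0"
        by (intro tendsto_mult tendsto_const isCont_tendsto_compose[OF isCont_shift X])
      consider "y < x0" | "x0 < y"
        using elim by linarith
      then show ?case
      proof cases
        case 1
        then have "\<forall>\<^sub>F n in sequentially. y < X n"
          using X by (simp add: order_tendstoD(1))
        then have "\<forall>\<^sub>F n in sequentially.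
            v y * g (X n - y) (X n) = indicator {0<..} (X n - y) * (v y * g (X n - y) (X n))"
          by eventually_elim simp
        then show ?thesis
          using 1 Lim_transform_eventually[OF lim] by simp
      next
        case 2
        then have "\<forall>\<^sub>F n in sequentially. X n < y"
          using X by (simp add: order_tendstoD(2))
        then have "\<forall>\<^sub>F n in sequentially.
            0 = indicator {0<..} (X n - y) * (v y * g (X n - y) (X n))"
          by eventually_elim simp
        then have "(\<lambda>n. indicator {0<..} (X n - y) * (v y * g (X n - y) (X n))) \<longlonglongrightarrow> 0"
          by (rule Lim_transform_eventually[OF tendsto_const])
        then show ?thesis
          using 2 by simp
      qed
    qed
  qed (use integrable_upwind_integrand[OF integrable] in auto)
qed

lemma isCont_kernel_mass: "isCont kernel_mass x0"
proof -
  have "kernel_mass = upwind_integral (\<lambda>_. 1)"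
    by (simp add: fun_eq_iff kernel_mass_def upwind_integral_def)
  then show ?thesis
    using isCont_upwind_integral[of "\<lambda>_. 1" 1] set_integrable_kernel by simp
qed

lemma abs_upwind_integral_le:
  assumes bound: "\<And>y. \<bar>v y\<bar> \<le> B"
    and integrable: "set_integrable lborel {0<..} (\<lambda>s. v (x - s) * g s x)"
  shows "\<bar>upwind_integral v x\<bar> \<le> B * kernel_mass x"
proof -
  have "\<bar>upwind_integral v x\<bar> \<le> (LBINT s:{0<..}. \<bar>v (x - s) * g s x\<bar>)"
    unfolding upwind_integral_def using set_integral_norm_bound[OF integrable] by simp
  also have "\<dots> \<le> (LBINT s:{0<..}. B * g s x)"
    using integrable set_integrable_kernel bound nonneg
    by (intro set_integral_mono set_integrable_abs set_integrable_mult_right)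
      (auto simp: abs_mult intro!: mult_right_mono)
  also have "\<dots> = B * kernel_mass x"
    by (simp add: kernel_mass_def)
  finally show ?thesis .
qed

lemma upwind_difference_integral:
  assumes "set_integrable lborel {0<..} (\<lambda>s. (v x - v (x - s)) * g s x)"
  shows "set_integrable lborel {0<..} (\<lambda>s. v (x - s) * g s x)"
    and "(LBINT s:{0<..}. (v x - v (x - s)) * g s x) = v x * kernel_mass x - upwind_integral v x"
proof -
  have kernel: "set_integrable lborel {0<..} (\<lambda>s. v x * g s x)"
    using set_integrable_kernel by (rule set_integrable_mult_right)
  have "set_integrable lborel {0<..} (\<lambda>s. v x * g s x - (v x - v (x - s)) * g s x)"
    using kernel assms by (rule set_integral_diff(1))
  then show shifted: "set_integrable lborel {0<..} (\<lambda>s. v (x - s) * g s x)"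
    by (simp add: algebra_simps)
  have "(LBINT s:{0<..}. (v x - v (x - s)) * g s x) = (LBINT s:{0<..}. v x * g s x - v (x - s) * g s x)"
    by (simp add: algebra_simps)
  also have "\<dots> = v x * kernel_mass x - upwind_integral v x"
    using kernel shifted by (simp add: set_integral_diff(2) kernel_mass_def upwind_integral_def)
  finally show "(LBINT s:{0<..}. (v x - v (x - s)) * g s x) = v x * kernel_mass x - upwind_integral v x" .
qed

definition duhamel_integral :: "(real \<Rightarrow> real \<Rightarrow> real) \<Rightarrow> real \<Rightarrow> real \<Rightarrow> real" where
  "duhamel_integral u t x =
     integral {0..t} (\<lambda>\<tau>. exp (kernel_mass x * \<tau>) * upwind_integral (\<lambda>y. u y \<tau>) x)"

context
  fixes u :: "real \<Rightarrow> real \<Rightarrow> real"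
  assumes continuous_on_solution: "\<And>x. continuous_on {0..} (\<lambda>\<tau>. u x \<tau>)"
    and set_integrable_solution: "\<And>x \<tau>. 0 < \<tau> \<Longrightarrow>
      set_integrable lborel {0<..} (\<lambda>s. (u x \<tau> - u (x - s) \<tau>) * g s x)"
    and solution_deriv: "\<And>x \<tau>. 0 < \<tau> \<Longrightarrow>
      ((\<lambda>\<tau>. u x \<tau>) has_real_derivative - (LBINT s:{0<..}. (u x \<tau> - u (x - s) \<tau>) * g s x)) (at \<tau>)"
begin

lemma has_integral_duhamel:
  assumes "0 \<le> t"
  shows "((\<lambda>\<tau>. exp (kernel_mass x * \<tau>) * upwind_integral (\<lambda>y. u y \<tau>) x)
    has_integral exp (kernel_mass x * t) * u x t - u x 0) {0..t}"
proof (rule variation_of_constants_has_integral[OF assms continuous_on_solution])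
  fix \<tau> :: real assume "0 < \<tau>"
  then show "((\<lambda>\<tau>. u x \<tau>) has_real_derivative
      upwind_integral (\<lambda>y. u y \<tau>) x - kernel_mass x * u x \<tau>) (at \<tau>)"
    using solution_deriv[of \<tau> x] upwind_difference_integral(2)[of "\<lambda>y. u y \<tau>", OF set_integrable_solution]
    by (simp add: mult.commute)
qed

lemma solution_eq_duhamel:
  assumes "0 \<le> t"
  shows "u x t = exp (- (kernel_mass x * t)) * (u x 0 + duhamel_integral u t x)"
  using integral_unique[OF has_integral_duhamel[OF assms, of x]]
  by (simp add: duhamel_integral_def exp_minus field_simps)

lemma isCont_duhamel_integral:
  assumes "0 \<le> t" and bound: "\<And>x \<tau>. 0 \<le> \<tau> \<Longrightarrow> \<tau> \<le> t \<Longrightarrow> \<bar>u x \<tau>\<bar> \<le> B"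
  shows "isCont (duhamel_integral u t) x0"
proof -
  define M where "M = (LBINT s:{0<..}. C * inverse (1 + s\<^sup>2))"
  have mass: "0 \<le> kernel_mass x" "kernel_mass x \<le> M" for x
    using kernel_mass_nonneg kernel_mass_le by (auto simp: M_def)
  have B: "0 \<le> B"
    using bound[of 0 0] assms(1) by force
  show ?thesis
    unfolding duhamel_integral_def
  proof (rule isCont_integral_param[where M="exp (M * t) * (B * M)"])
    show "(\<lambda>\<tau>. exp (kernel_mass x * \<tau>) * upwind_integral (\<lambda>y. u y \<tau>) x) integrable_on {0..t}" for x
      using has_integral_duhamel[OF assms(1)] by blast
    fix \<tau> assume \<tau>: "\<tau> \<in> {0<..t}"
    have integrable: "set_integrable lborel {0<..} (\<lambda>s. u (x - s) \<tau> * g s x)" for x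
      using upwind_difference_integral(1)[of "\<lambda>y. u y \<tau>", OF set_integrable_solution] \<tau> by simp
    show "isCont (\<lambda>x. exp (kernel_mass x * \<tau>) * upwind_integral (\<lambda>y. u y \<tau>) x) x0"
      using \<tau> bound integrable
      by (intro continuous_intros isCont_kernel_mass isCont_upwind_integral[where B=B]) auto
    fix x
    have "exp (kernel_mass x * \<tau>) \<le> exp (M * t)"
      using \<tau> mass[of x] by (auto intro!: mult_mono)
    moreover have "\<bar>upwind_integral (\<lambda>y. u y \<tau>) x\<bar> \<le> B * M"
      using abs_upwind_integral_le[OF _ integrable] \<tau> bound mass[of x] B
      by (meson greaterThanAtMost_iff less_imp_le mult_left_mono order_trans)
    ultimately show "\<bar>exp (kernel_mass x * \<tau>) * upwind_integral (\<lambda>y. u y \<tau>) x\<bar> \<le> exp (M * t) * (B * M)"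
      by (simp add: abs_mult mult_mono)
  qed
qed

end

end

lemma ex_bound_1_plus_square_mult:
  fixes H :: "real \<Rightarrow> real"
  assumes bounded: "bounded (range H)"
    and decay: "(\<exists>R. \<forall>s. \<bar>s\<bar> > R \<longrightarrow> H s = 0) \<or>
                (\<forall>k n. bounded (range (\<lambda>s. \<bar>s\<bar> ^ n * (deriv ^^ k) H s)))"
  shows "\<exists>C. \<forall>s. (1 + s\<^sup>2) * H s \<le> C"
proof -
  obtain M where M: "\<And>s. \<bar>H s\<bar> \<le> M"
    using bounded unfolding bounded_iff by auto
  from decay show ?thesis
  proof
    assume "\<exists>R. \<forall>s. \<bar>s\<bar> > R \<longrightarrow> H s = 0"
    then obtain R where R: "\<And>s. \<bar>s\<bar> > R \<Longrightarrow> H s = 0"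
      by auto
    have "(1 + s\<^sup>2) * H s \<le> (1 + R\<^sup>2) * M" for s
    proof (cases "\<bar>s\<bar> > R")
      case False
      then have "s\<^sup>2 \<le> R\<^sup>2"
        by (metis abs_ge_zero not_less power2_abs power_mono)
      have "(1 + s\<^sup>2) * H s \<le> (1 + s\<^sup>2) * M"
        using M[of s] by (intro mult_left_mono) auto
      also have "\<dots> \<le> (1 + R\<^sup>2) * M"
        using \<open>s\<^sup>2 \<le> R\<^sup>2\<close> M[of 0] by (intro mult_right_mono) auto
      finally show ?thesis .
    qed (use R M[of s] in auto)
    then show ?thesis
      by blast
  next
    assume "\<forall>k n. bounded (range (\<lambda>s. \<bar>s\<bar> ^ n * (deriv ^^ k) H s))"
    then obtain M2 where M2: "\<And>s. \<bar>\<bar>s\<bar> ^ 2 * H s\<bar> \<le> M2"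
      unfolding bounded_iff by (metis (no_types, lifting) funpow_0 rangeI real_norm_def)
    have "(1 + s\<^sup>2) * H s \<le> M + M2" for s
      using M[of s] M2[of s] by (simp add: algebra_simps)
    then show ?thesis
      by blast
  qed
qed

lemma gamma_ker_le_cauchy:
  assumes H_le: "\<And>s. (1 + s\<^sup>2) * H s \<le> C" and H_nonneg: "\<And>s. 0 \<le> H s"
    and "\<delta> \<le> \<zeta> x" and "0 < \<delta>"
  shows "gamma_ker H \<zeta> s x \<le> C / min 1 (\<delta>\<^sup>2) * inverse (1 + s\<^sup>2)"
proof -
  define z where "z = \<zeta> x"
  have z: "\<delta> \<le> z" "0 < z"
    using assms by (auto simp: z_def)
  have "0 \<le> C"
    using H_le[of 0] H_nonneg[of 0] by simp
  have "(z\<^sup>2 + s\<^sup>2) * H (s / z) = z\<^sup>2 * ((1 + (s / z)\<^sup>2) * H (s / z))"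
    using z by (simp add: field_simps power2_eq_square)
  also have "\<dots> \<le> z\<^sup>2 * C"
    using H_le by (simp add: mult_left_mono)
  finally have "H (s / z) / z\<^sup>2 \<le> C / (z\<^sup>2 + s\<^sup>2)"
    using z by (simp add: frac_le_eq add_pos_nonneg divide_nonpos_pos algebra_simps)
  also have "\<dots> \<le> C / (min 1 (\<delta>\<^sup>2) * (1 + s\<^sup>2))"
  proof (rule divide_left_mono[OF _ \<open>0 \<le> C\<close>])
    have m: "0 < min 1 (\<delta>\<^sup>2)" "min 1 (\<delta>\<^sup>2) \<le> 1" "min 1 (\<delta>\<^sup>2) \<le> z\<^sup>2"
      using z \<open>0 < \<delta>\<close> power_mono[of \<delta> z 2] by (auto simp: min.coboundedI2)
    then have "min 1 (\<delta>\<^sup>2) * s\<^sup>2 \<le> s\<^sup>2"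
      by (simp add: mult_left_le_one_le)
    with m show "min 1 (\<delta>\<^sup>2) * (1 + s\<^sup>2) \<le> z\<^sup>2 + s\<^sup>2"
      by (simp add: distrib_left)
    show "0 < (z\<^sup>2 + s\<^sup>2) * (min 1 (\<delta>\<^sup>2) * (1 + s\<^sup>2))"
      using m z by (intro mult_pos_pos add_pos_nonneg) auto
  qed
  finally show ?thesis
    by (simp add: gamma_ker_def z_def divide_inverse)
qed

lemma upwind_kernel_gamma_ker:
  assumes H_cont: "\<And>s. isCont H s" and H_nonneg: "\<And>s. 0 \<le> H s"
    and H_le: "\<And>s. (1 + s\<^sup>2) * H s \<le> C"
    and zeta_cont: "continuous_on UNIV \<zeta>" and zeta_ge: "\<And>x. \<delta> \<le> \<zeta> x" and "0 < \<delta>"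
  shows "upwind_kernel (gamma_ker H \<zeta>) (C / min 1 (\<delta>\<^sup>2))"
proof
  have zeta_pos: "\<zeta> x \<noteq> 0" for x
    using zeta_ge[of x] \<open>0 < \<delta>\<close> by auto
  have "isCont \<zeta> x" for x
    using zeta_cont by (simp add: continuous_on_eq_continuous_at)
  then show "isCont (\<lambda>x. gamma_ker H \<zeta> (x - y) x) x0" for y x0
    unfolding gamma_ker_def using zeta_pos
    by (intro continuous_intros isCont_o2[OF _ H_cont]) auto
  show "continuous_on UNIV (\<lambda>s. gamma_ker H \<zeta> s x)" for x
    unfolding gamma_ker_def using zeta_pos
    by (intro continuous_at_imp_continuous_on ballI continuous_intros isCont_o2[OF _ H_cont]) auto
  show "gamma_ker H \<zeta> s x \<le> C / min 1 (\<delta>\<^sup>2) * inverse (1 + s\<^sup>2)" for s x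
    using gamma_ker_le_cauchy[where H=H and \<zeta>=\<zeta>, OF H_le H_nonneg zeta_ge \<open>0 < \<delta>\<close>] .
qed (simp add: gamma_ker_def H_nonneg)

theorem corollary1:
  fixes H \<zeta> \<psi>0 :: "real \<Rightarrow> real" and u :: "real \<Rightarrow> real \<Rightarrow> real"
    and \<delta>m :: real and D :: "real set"
  assumes H_smooth: "smooth_fun H"
    and H_bdd: "bounded (range H)"
    and H_even: "\<And>s. H (- s) = H s"
    and H_nonneg: "\<And>s. H s \<ge> 0"
    and H_moment: "((\<lambda>s. s * H s) has_integral 1) {0..}"
    and H_decay: "(\<exists>R. \<forall>s. \<bar>s\<bar> > R \<longrightarrow> H s = 0) \<or>
                  (\<forall>k n. bounded (range (\<lambda>s. \<bar>s\<bar> ^ n * (deriv ^^ k) H s)))"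
    and zeta_cont: "continuous_on UNIV \<zeta>"
    and zeta_bdd: "bounded (range \<zeta>)"
    and zeta_min: "(\<exists>x0. \<zeta> x0 = \<delta>m) \<and> (\<forall>x. \<delta>m \<le> \<zeta> x)"
    and delta_pos: "\<delta>m > 0"
    and psi_pw: "pw_cont_off \<psi>0 D"
    and psi_bdd: "bounded (range \<psi>0)"
    and u_init: "\<And>x. u x 0 = \<psi>0 x"
    and u_cont0: "\<And>x. continuous_on {0..} (\<lambda>t. u x t)"
    and u_bdd: "\<And>T. bounded ((\<lambda>(x, t). u x t) ` (UNIV \<times> {0..T}))"
    and u_int: "\<And>x t. t > 0 \<Longrightarrow>
        set_integrable lborel {0<..} (\<lambda>s. (u x t - u (x - s) t) * gamma_ker H \<zeta> s x)"
    and u_eq: "\<And>x t. t > 0 \<Longrightarrow>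
        ((\<lambda>\<tau>. u x \<tau>) has_real_derivative
           - (LBINT s:{0<..}. (u x t - u (x - s) t) * gamma_ker H \<zeta> s x)) (at t)"
  shows "\<forall>t > 0. pw_cont_off (\<lambda>x. u x t) D"
proof (intro allI impI)
  fix t :: real assume "0 < t"
  have "isCont H s" for s
    using H_smooth unfolding smooth_fun_def by (metis differentiable_imp_continuous_within funpow_0)
  moreover obtain C where "\<And>s. (1 + s\<^sup>2) * H s \<le> C"
    using ex_bound_1_plus_square_mult[OF H_bdd H_decay] by blast
  ultimately interpret upwind_kernel "gamma_ker H \<zeta>" "C / min 1 (\<delta>m\<^sup>2)"
    using H_nonneg zeta_cont zeta_min delta_pos by (intro upwind_kernel_gamma_ker) auto
  obtain B where "\<forall>z\<in>(\<lambda>(x, t). u x t) ` (UNIV \<times> {0..t}). norm z \<le> B"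
    using u_bdd[of t] unfolding bounded_iff by blast
  then have B: "\<And>x \<tau>. 0 \<le> \<tau> \<Longrightarrow> \<tau> \<le> t \<Longrightarrow> \<bar>u x \<tau>\<bar> \<le> B"
    by auto
  have solution_eq: "(\<lambda>x. u x t) = (\<lambda>x. exp (- (kernel_mass x * t)) * \<psi>0 x
      + exp (- (kernel_mass x * t)) * duhamel_integral u t x)"
    using solution_eq_duhamel[OF u_cont0 u_int u_eq] \<open>0 < t\<close>
    by (simp add: fun_eq_iff u_init distrib_left)
  show "pw_cont_off (\<lambda>x. u x t) D"
    unfolding solution_eq using \<open>0 < t\<close> isCont_duhamel_integral[OF u_cont0 u_int u_eq _ B]
    by (intro pw_cont_off_mult_add psi_pw continuous_intros isCont_kernel_mass) auto
qed

end
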